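(* Assume the setting of the context and fix $\Delta=(h,\Delta x)$. Let $(c^{(\iota)}_{i,j})$, $\iota\in\mathbb{N}$, and $\mathbf{V}^{(\iota)}=(\mathbf{V}^{(\iota)}_1,\mathbf{V}^{(\iota)}_2)\in B(\mathcal{A}^{\Delta x})^2$ be a sequence generated by the policy iteration: starting from an initial policy $c^{(0)}_{i,j}\in\mathcal{C}^\Delta_j(x_i)$, for each $\iota\ge0$, (i) (policy evaluation) $\mathbf{V}^{(\iota)}$ solves, for all $i\in\mathbb{N}$, $j=1,2$, $$V^{(\iota)}_{i,j}=hu(c^{(\iota)}_{i,j})+(1-\rho h)\Big[\lambda_jhV^{(\iota)}_{i,\bar\jmath}+(1-\lambda_jh)\sum_k\beta_k\big(x_i+hs_{i,j}(c^{(\iota)}_{i,j})\big)V^{(\iota)}_{k,j}\Big];$$ (ii) (policy update) $c^{(\iota+1)}_{i,j}\in\arg\max_{c\in\mathcal{C}^\Delta_j(x_i)}\Big\{hu(c)+(1-\rho h)(1-\lambda_jh)\sum_k\beta_k(x_i+hs_{i,j}(c))V^{(\iota)}_{k,j}\Big\}$. Then $\mathbf{V}^{(\iota)}\le\mathbf{V}^{(\iota+1)}$ componentwise for all $\iota\in\mathbb{N}$. Moreover $\lim_{\iota\to\infty}\mathbf{V}^{(\iota)}=\mathbf{V}$, where $\mathbf{V}\in B(\mathcal{A}^{\Delta x})^2$ is the unique solution of the scheme, i.e. $\mathcal{F}^\Delta_j(x_i,(V_{i,j},V_{i,\bar\jmath}),V_{\cdot,j})=0$ for all $i\in\mathbb{N}$,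 $j=1,2$.
   Context: Constants: $\rho>0$, $r<\rho$, $0<y_1<y_2$, $\gamma>1$, $\underline{x}\le0$ with $\rho\underline{x}+y_j>0$, $\lambda_1,\lambda_2\ge0$; $\bar\jmath=3-j$; $u(c)=\frac{c^{1-\gamma}}{1-\gamma}$ for $c>0$, $u(0)=-\infty$. Discretization $\Delta=(h,\Delta x)$, $h,\Delta x>0$, $\rho h<1$, $\lambda_jh<1$. Grid $x_i=\underline{x}+i\Delta x$, $i\in\mathbb{N}=\{0,1,\dots\}$, $\mathcal{A}^{\Delta x}=\{x_i\}$; $B(\mathcal{A}^{\Delta x})$ = bounded real sequences indexed by $\mathbb{N}$. $\beta_k(x)=\max\{0,1-|x-x_k|/\Delta x\}$ for $x\ge\underline{x}$. $\mathcal{C}^\Delta_j(x_i)=\{c\ge0:x_i+h(rx_i+y_j-c)\ge\underline{x}\}$, $s_{i,j}(c)=rx_i+y_j-c$. Scheme: $$\mathcal{F}^\Delta_j(x_i,(\mathsf{q}_j,\mathsf{q}_{\bar\jmath}),\mathsf{U})=\rho\mathsf{q}_j-(1-\rho h)\lambda_j(\mathsf{q}_{\bar\jmath}-\mathsf{q}_j)-\sup_{c\in\mathcal{C}^\Delta_j(x_i)}\Big\{u(c)+\frac{(1-\rho h)(1-\lambda_jh)}{h}\Big(\sum_k\beta_k(x_i+hs_{i,j}(c))\mathsf{U}_k-\mathsf{q}_j\Big)\Big\}.$$ *)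

theory Defs
  imports "HOL-Analysis.Analysis"
begin

definition util :: "real \<Rightarrow> real \<Rightarrow> ereal" where
  "util \<gamma> c = (if c > 0 then ereal (c powr (1 - \<gamma>) / (1 - \<gamma>)) else -\<infinity>)"

definition grid :: "real \<Rightarrow> real \<Rightarrow> nat \<Rightarrow> real" where
  "grid xl dx i = xl + real i * dx"

definition hatfn :: "real \<Rightarrow> real \<Rightarrow> nat \<Rightarrow> real \<Rightarrow> real" where
  "hatfn xl dx k x = max 0 (1 - \<bar>x - grid xl dx k\<bar> / dx)"

definition interp :: "real \<Rightarrow> real \<Rightarrow> (nat \<Rightarrow> real) \<Rightarrow> real \<Rightarrow> real" where
  "interp xl dx U x = (\<Sum>k. hatfn xl dx k x * U k)"

definition drift :: "real \<Rightarrow> real \<Rightarrow> real \<Rightarrow> real \<Rightarrow> nat \<Rightarrow> real \<Rightarrow> real" where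
  "drift r yj xl dx i c = r * grid xl dx i + yj - c"

definition adm :: "real \<Rightarrow> real \<Rightarrow> real \<Rightarrow> real \<Rightarrow> real \<Rightarrow> nat \<Rightarrow> real set" where
  "adm r yj h xl dx i = {c. c \<ge> 0 \<and> grid xl dx i + h * drift r yj xl dx i c \<ge> xl}"

definition schemeF ::
  "real \<Rightarrow> real \<Rightarrow> real \<Rightarrow> real \<Rightarrow> real \<Rightarrow> real \<Rightarrow> real \<Rightarrow> real \<Rightarrow>
   nat \<Rightarrow> real \<Rightarrow> real \<Rightarrow> (nat \<Rightarrow> real) \<Rightarrow> ereal" where
  "schemeF \<rho> r \<gamma> yj lj h xl dx i q qbar U =
     ereal (\<rho> * q - (1 - \<rho> * h) * lj * (qbar - q))
     - (SUP c \<in> adm r yj h xl dx i.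
          util \<gamma> c + ereal ((1 - \<rho> * h) * (1 - lj * h) / h
             * (interp xl dx U (grid xl dx i + h * drift r yj xl dx i c) - q)))"

end

theory Submission
  imports Defs
begin

text \<open>
  For fixed \<open>\<Delta>\<close> the scheme is the Bellman equation \<open>W = sup\<^sub>c L\<^sub>c W\<close> of a discounted
  control problem on the states \<open>(i, j)\<close> with discount \<open>\<theta> = 1 - \<rho>h\<close>: every one-step operator
  \<open>L\<^sub>c\<close> is monotone and satisfies \<open>L\<^sub>c (U + d) \<le> L\<^sub>c U + \<theta> d\<close>, since both the interpolation
  weights and the regime-switching weights form convex combinations.  This single property gives a
  comparison principle (iterate the shift bound and let \<open>\<theta>\<^sup>n \<rightarrow> 0\<close>), which yields monotonicity of
  the policy values, a uniform upper bound for them, and uniqueness of bounded solutions.  The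
  increasing limit \<open>W\<close> is a subsolution by monotonicity of \<open>L\<^sub>c\<close>; comparing \<open>W\<close> with the
  iterates gives the geometric rate \<open>W - V\<^sup>\<iota> \<le> \<theta>\<^sup>\<iota> M\<close>, which makes \<open>W\<close> a supersolution and the
  convergence uniform.
\<close>

lemma nonpos_if_le_geometric:
  fixes \<theta> x d :: real
  assumes "0 \<le> \<theta>" "\<theta> < 1" "\<And>n. x \<le> \<theta> ^ n * d"
  shows "x \<le> 0"
proof (rule LIMSEQ_le_const)
  show "(\<lambda>n. \<theta> ^ n * d) \<longlonglongrightarrow> 0"
    using assms(1,2) by (intro tendsto_mult_left_zero LIMSEQ_power_zero) auto
qed (use assms(3) in auto)

lemma bounded_image_gap:
  fixes X Y :: "'a \<Rightarrow> real"
  assumes "bounded (Y ` S)" "bounded (X ` S)"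
  obtains d where "\<And>t. t \<in> S \<Longrightarrow> Y t \<le> X t + d"
proof -
  obtain a b where "\<forall>t\<in>S. \<bar>Y t\<bar> \<le> a" "\<forall>t\<in>S. \<bar>X t\<bar> \<le> b"
    using assms unfolding bounded_real by auto
  then have "Y t \<le> X t + (a + b)" if "t \<in> S" for t
    using that abs_le_D1[of "Y t" a] abs_le_D2[of "X t" b] by fastforce
  then show thesis by (rule that)
qed

locale discounted_control =
  fixes S :: "'s set" and Adm :: "'s \<Rightarrow> 'c set"
    and L :: "'s \<Rightarrow> 'c \<Rightarrow> ('s \<Rightarrow> real) \<Rightarrow> real" and \<theta> :: real
  assumes discount_nonneg: "0 \<le> \<theta>" and discount_less_1: "\<theta> < 1"
    and L_shift: "\<lbrakk>s \<in> S; c \<in> Adm s; \<And>t. t \<in> S \<Longrightarrow> U t \<le> U' t + d\<rbrakk>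
      \<Longrightarrow> L s c U \<le> L s c U' + \<theta> * d"
begin

lemma L_mono: "\<lbrakk>s \<in> S; c \<in> Adm s; \<And>t. t \<in> S \<Longrightarrow> U t \<le> U' t\<rbrakk> \<Longrightarrow> L s c U \<le> L s c U'"
  using L_shift[of s c U U' 0] by simp

text \<open>\<open>W s = (SUP c\<in>Adm s. L s c W)\<close>, phrased without \<open>Sup\<close> to avoid boundedness side conditions.\<close>

definition bellman_solution :: "('s \<Rightarrow> real) \<Rightarrow> bool" where
  "bellman_solution W \<longleftrightarrow>
     (\<forall>s\<in>S. (\<forall>c\<in>Adm s. L s c W \<le> W s) \<and> (\<forall>\<epsilon>>0. \<exists>c\<in>Adm s. W s - \<epsilon> < L s c W))"

text \<open>\<open>X'\<close> may differ from \<open>X\<close>: for the convergence rate \<open>X\<close> is an iterate and \<open>X'\<close> the next one.\<close>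

lemma comparison_step:
  assumes link: "\<And>s \<epsilon>. s \<in> S \<Longrightarrow> \<epsilon> > 0 \<Longrightarrow> \<exists>c\<in>Adm s. Y s - \<epsilon> < L s c Y \<and> L s c X \<le> X' s"
    and gap: "\<And>t. t \<in> S \<Longrightarrow> Y t \<le> X t + d"
    and "s \<in> S"
  shows "Y s \<le> X' s + \<theta> * d"
proof (rule field_le_epsilon)
  fix \<epsilon> :: real
  assume "0 < \<epsilon>"
  then obtain c where c: "c \<in> Adm s" "Y s - \<epsilon> < L s c Y" "L s c X \<le> X' s"
    using link \<open>s \<in> S\<close> by blast
  moreover have "L s c Y \<le> L s c X + \<theta> * d"
    using \<open>s \<in> S\<close> c(1) gap by (rule L_shift)
  ultimately show "Y s \<le> X' s + \<theta> * d + \<epsilon>" by linarith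
qed

lemma comparison:
  assumes link: "\<And>s \<epsilon>. s \<in> S \<Longrightarrow> \<epsilon> > 0 \<Longrightarrow> \<exists>c\<in>Adm s. Y s - \<epsilon> < L s c Y \<and> L s c X \<le> X s"
    and gap: "\<And>t. t \<in> S \<Longrightarrow> Y t \<le> X t + d"
    and "s \<in> S"
  shows "Y s \<le> X s"
proof -
  have "\<forall>t\<in>S. Y t \<le> X t + \<theta> ^ n * d" for n
  proof (induction n)
    case 0
    then show ?case using gap by simp
  next
    case (Suc n)
    then show ?case
      using comparison_step[OF link, of "\<theta> ^ n * d"] by (simp add: mult.assoc)
  qed
  then have "Y s - X s \<le> \<theta> ^ n * d" for n
    using \<open>s \<in> S\<close> by (simp add: diff_le_eq add.commute)
  then show ?thesis
    using nonpos_if_le_geometric[OF discount_nonneg discount_less_1] by fastforce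
qed

lemma bellman_solution_le:
  assumes "bellman_solution X" "bellman_solution Y" "bounded (X ` S)" "bounded (Y ` S)" "s \<in> S"
  shows "Y s \<le> X s"
proof -
  have "\<exists>c\<in>Adm t. Y t - \<epsilon> < L t c Y \<and> L t c X \<le> X t"
    if t: "t \<in> S" and "\<epsilon> > 0" for t \<epsilon>
  proof -
    obtain c where "c \<in> Adm t" "Y t - \<epsilon> < L t c Y"
      using assms(2) t \<open>\<epsilon> > 0\<close> unfolding bellman_solution_def by blast
    moreover have "L t c X \<le> X t"
      using assms(1) t \<open>c \<in> Adm t\<close> unfolding bellman_solution_def by blast
    ultimately show ?thesis by blast
  qed
  moreover obtain d where "\<And>t. t \<in> S \<Longrightarrow> Y t \<le> X t + d"
    using bounded_image_gap[OF assms(4,3)] by blast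
  ultimately show ?thesis
    using assms(5) by (rule comparison)
qed

lemma bellman_solution_unique:
  assumes "bellman_solution X" "bellman_solution Y" "bounded (X ` S)" "bounded (Y ` S)" "s \<in> S"
  shows "Y s = X s"
  using bellman_solution_le[OF assms] bellman_solution_le[OF assms(2,1,4,3,5)] by simp

end

locale policy_iteration = discounted_control S Adm L \<theta>
  for S :: "'s set" and Adm :: "'s \<Rightarrow> 'c set" and L \<theta> +
  fixes pol :: "nat \<Rightarrow> 's \<Rightarrow> 'c" and V :: "nat \<Rightarrow> 's \<Rightarrow> real"
  assumes pol_adm: "s \<in> S \<Longrightarrow> pol n s \<in> Adm s"
    and V_bounded: "bounded (V n ` S)"
    and policy_evaluation: "s \<in> S \<Longrightarrow> V n s = L s (pol n s) (V n)"
    and policy_improvement: "s \<in> S \<Longrightarrow> c \<in> Adm s \<Longrightarrow> L s c (V n) \<le> L s (pol (Suc n) s) (V n)"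
begin

lemma V_mono:
  assumes "s \<in> S"
  shows "V n s \<le> V (Suc n) s"
proof -
  have "\<exists>c\<in>Adm t. V n t - \<epsilon> < L t c (V n) \<and> L t c (V (Suc n)) \<le> V (Suc n) t"
    if "t \<in> S" "\<epsilon> > 0" for t \<epsilon>
  proof (intro bexI conjI)
    show "V n t - \<epsilon> < L t (pol (Suc n) t) (V n)"
      using that policy_evaluation[of t n] policy_improvement[OF that(1) pol_adm, of n n] by simp
  qed (use that pol_adm policy_evaluation in auto)
  moreover obtain d where "\<And>t. t \<in> S \<Longrightarrow> V n t \<le> V (Suc n) t + d"
    using bounded_image_gap[OF V_bounded V_bounded] by blast
  ultimately show ?thesis
    using assms by (rule comparison)
qed

lemma L_le_next_value:
  assumes "s \<in> S" "c \<in> Adm s"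
  shows "L s c (V n) \<le> V (Suc n) s"
proof -
  have "L s c (V n) \<le> L s (pol (Suc n) s) (V n)"
    using assms by (rule policy_improvement)
  also have "\<dots> \<le> L s (pol (Suc n) s) (V (Suc n))"
    by (rule L_mono[OF assms(1) pol_adm[OF assms(1)] V_mono])
  also have "\<dots> = V (Suc n) s"
    using assms(1) policy_evaluation by simp
  finally show ?thesis .
qed

text \<open>The rewards are bounded above because the improved value \<open>V 1\<close> dominates them; hence a large
  constant is a supersolution.\<close>

lemma V_bounded_above: obtains M where "\<And>n s. s \<in> S \<Longrightarrow> V n s \<le> M"
proof -
  obtain B0 B1 where B: "B0 > 0" "\<forall>s\<in>S. \<bar>V 0 s\<bar> \<le> B0" "B1 > 0" "\<forall>s\<in>S. \<bar>V 1 s\<bar> \<le> B1"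
    using V_bounded[of 0] V_bounded[of 1] unfolding bounded_pos by auto
  define M where "M = (B0 + B1) / (1 - \<theta>)"
  have "(1 - \<theta>) * M = B0 + B1"
    using discount_less_1 by (simp add: M_def)
  moreover have "\<theta> * B0 \<le> B0"
    using discount_less_1 B(1) by simp
  ultimately have M: "B1 + \<theta> * (M + B0) \<le> M"
    by (simp add: algebra_simps)
  have super: "L s c (\<lambda>_. M) \<le> M" if "s \<in> S" "c \<in> Adm s" for s c
  proof -
    have "L s c (\<lambda>_. M) \<le> L s c (V 0) + \<theta> * (M + B0)"
      using that B(2) by (intro L_shift) (auto simp: abs_le_iff)
    also have "\<dots> \<le> B1 + \<theta> * (M + B0)"
      using L_le_next_value[OF that, of 0] B(4) that(1) by (auto simp: abs_le_iff)
    finally show ?thesis using M by linarith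
  qed
  have "V n s \<le> M" if "s \<in> S" for n s
  proof -
    have "\<exists>c\<in>Adm t. V n t - \<epsilon> < L t c (V n) \<and> L t c (\<lambda>_. M) \<le> M"
      if t: "t \<in> S" and "\<epsilon> > 0" for t \<epsilon>
    proof (intro bexI conjI)
      show "V n t - \<epsilon> < L t (pol n t) (V n)"
        using policy_evaluation[OF t] \<open>\<epsilon> > 0\<close> by simp
    qed (use t pol_adm super in auto)
    moreover have "bounded ((\<lambda>_. M) ` S)"
      by (rule bounded_subset[of "{M}"]) auto
    then obtain d where "\<And>t. t \<in> S \<Longrightarrow> V n t \<le> M + d"
      using bounded_image_gap[OF V_bounded] by blast
    ultimately show ?thesis
      using that by (rule comparison)
  qed
  then show thesis by (rule that)
qed

definition V_lim :: "'s \<Rightarrow> real" where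
  "V_lim s = (SUP n. V n s)"

lemma bdd_above_V: "s \<in> S \<Longrightarrow> bdd_above (range (\<lambda>n. V n s))"
  by (metis V_bounded_above bdd_aboveI2)

lemma V_tendsto_V_lim: "s \<in> S \<Longrightarrow> (\<lambda>n. V n s) \<longlonglongrightarrow> V_lim s"
  unfolding V_lim_def by (intro LIMSEQ_incseq_SUP bdd_above_V incseq_SucI V_mono)

lemma V_le_V_lim: "s \<in> S \<Longrightarrow> V n s \<le> V_lim s"
  unfolding V_lim_def by (intro cSUP_upper bdd_above_V) auto

lemma bounded_V_lim: "bounded (V_lim ` S)"
proof -
  obtain M where M: "\<And>n s. s \<in> S \<Longrightarrow> V n s \<le> M"
    using V_bounded_above by blast
  obtain B where B: "\<forall>s\<in>S. \<bar>V 0 s\<bar> \<le> B"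
    using V_bounded[of 0] unfolding bounded_real by auto
  have "\<bar>V_lim s\<bar> \<le> max B M" if "s \<in> S" for s
  proof -
    have "V_lim s \<le> M"
      unfolding V_lim_def using M that by (intro cSUP_least) auto
    moreover have "V 0 s \<le> V_lim s" "- B \<le> V 0 s"
      using V_le_V_lim B that by auto
    ultimately show ?thesis by linarith
  qed
  then show ?thesis
    unfolding bounded_real by blast
qed

lemma V_lim_subsolution:
  assumes "s \<in> S" "\<epsilon> > 0"
  shows "\<exists>c\<in>Adm s. V_lim s - \<epsilon> < L s c V_lim"
proof -
  obtain n where n: "V_lim s - \<epsilon> < V n s"
    using order_tendstoD(1)[OF V_tendsto_V_lim[OF assms(1)], of "V_lim s - \<epsilon>"] assms(2)
    by (auto simp: eventually_sequentially)
  also have "V n s = L s (pol n s) (V n)"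
    using assms(1) by (rule policy_evaluation)
  also have "\<dots> \<le> L s (pol n s) V_lim"
    by (rule L_mono[OF assms(1) pol_adm[OF assms(1)] V_le_V_lim])
  finally show ?thesis
    using assms(1) pol_adm by blast
qed

lemma V_lim_rate: obtains M where "\<And>n s. s \<in> S \<Longrightarrow> V_lim s \<le> V n s + \<theta> ^ n * M"
proof -
  obtain M where M: "\<And>s. s \<in> S \<Longrightarrow> V_lim s \<le> V 0 s + M"
    using bounded_image_gap[OF bounded_V_lim V_bounded] by blast
  have "\<forall>s\<in>S. V_lim s \<le> V n s + \<theta> ^ n * M" for n
  proof (induction n)
    case 0
    then show ?case using M by simp
  next
    case (Suc n)
    have "\<exists>c\<in>Adm s. V_lim s - \<epsilon> < L s c V_lim \<and> L s c (V n) \<le> V (Suc n) s"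
      if "s \<in> S" "\<epsilon> > 0" for s \<epsilon>
      using V_lim_subsolution[OF that] L_le_next_value[OF that(1)] by blast
    then show ?case
      using comparison_step[of V_lim "V n" "V (Suc n)" "\<theta> ^ n * M"] Suc by (simp add: mult.assoc)
  qed
  then show thesis
    using that by blast
qed

lemma V_lim_supersolution:
  assumes "s \<in> S" "c \<in> Adm s"
  shows "L s c V_lim \<le> V_lim s"
proof -
  obtain M where M: "\<And>n s. s \<in> S \<Longrightarrow> V_lim s \<le> V n s + \<theta> ^ n * M"
    using V_lim_rate by blast
  have "L s c V_lim - V_lim s \<le> \<theta> ^ n * (\<theta> * M)" for n
  proof -
    have "L s c V_lim \<le> L s c (V n) + \<theta> * (\<theta> ^ n * M)"
      using assms M by (rule L_shift)
    also have "\<dots> \<le> V_lim s + \<theta> * (\<theta> ^ n * M)"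
      using L_le_next_value[OF assms, of n] V_le_V_lim[OF assms(1), of "Suc n"] by linarith
    finally show ?thesis by (simp add: algebra_simps)
  qed
  then show ?thesis
    using nonpos_if_le_geometric[OF discount_nonneg discount_less_1] by fastforce
qed

lemma bellman_solution_V_lim: "bellman_solution V_lim"
  unfolding bellman_solution_def using V_lim_subsolution V_lim_supersolution by blast

lemma V_uniform_convergence:
  assumes "\<epsilon> > 0"
  shows "\<exists>N. \<forall>n\<ge>N. \<forall>s\<in>S. \<bar>V n s - V_lim s\<bar> < \<epsilon>"
proof -
  obtain M where M: "\<And>n s. s \<in> S \<Longrightarrow> V_lim s \<le> V n s + \<theta> ^ n * M"
    using V_lim_rate by blast
  have "(\<lambda>n. \<theta> ^ n * M) \<longlonglongrightarrow> 0"
    using discount_nonneg discount_less_1 by (intro tendsto_mult_left_zero LIMSEQ_power_zero) auto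
  then obtain N where N: "\<And>n. n \<ge> N \<Longrightarrow> \<theta> ^ n * M < \<epsilon>"
    using order_tendstoD(2)[of _ 0 sequentially \<epsilon>] assms by (auto simp: eventually_sequentially)
  have "\<bar>V n s - V_lim s\<bar> < \<epsilon>" if "n \<ge> N" "s \<in> S" for n s
    using M[OF that(2), of n] N[OF that(1)] V_le_V_lim[OF that(2), of n] by linarith
  then show ?thesis by blast
qed

end

definition crra :: "real \<Rightarrow> real \<Rightarrow> real" where
  "crra \<gamma> c = c powr (1 - \<gamma>) / (1 - \<gamma>)"

lemma util_pos: "0 < c \<Longrightarrow> util \<gamma> c = ereal (crra \<gamma> c)"
  by (simp add: util_def crra_def)

lemma util_nonpos: "\<not> 0 < c \<Longrightarrow> util \<gamma> c = -\<infinity>"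
  by (simp add: util_def)

lemma interp_eq_convex_combination:
  assumes "dx > 0" "x \<ge> xl"
  obtains k t where "0 \<le> t" "t \<le> 1" "\<And>U. interp xl dx U x = (1 - t) * U k + t * U (Suc k)"
proof -
  define z where "z = (x - xl) / dx"
  define k where "k = nat \<lfloor>z\<rfloor>"
  define t where "t = z - real k"
  have "z \<ge> 0" using assms by (simp add: z_def)
  then have k: "real k \<le> z" "z < real k + 1"
    unfolding k_def by linarith+
  have hat: "hatfn xl dx m x = max 0 (1 - \<bar>z - real m\<bar>)" for m
  proof -
    have "(x - (xl + real m * dx)) / dx = z - real m"
      using assms by (simp add: z_def field_simps)
    then have "\<bar>x - (xl + real m * dx)\<bar> / dx = \<bar>z - real m\<bar>"
      using assms by (metis abs_divide abs_of_pos)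
    then show ?thesis by (simp add: hatfn_def grid_def)
  qed
  have "hatfn xl dx m x = 0" if "m \<notin> {k, Suc k}" for m
  proof -
    have "real m + 1 \<le> real k \<or> real m \<ge> real k + 2"
      using that by auto
    then have "\<bar>z - real m\<bar> \<ge> 1"
      using k by linarith
    then show ?thesis by (simp add: hat)
  qed
  then have "interp xl dx U x = (\<Sum>m\<in>{k, Suc k}. hatfn xl dx m x * U m)" for U
    unfolding interp_def by (intro suminf_finite) auto
  moreover have "hatfn xl dx k x = 1 - t" "hatfn xl dx (Suc k) x = t"
    using k by (simp_all add: hat t_def)
  ultimately have "interp xl dx U x = (1 - t) * U k + t * U (Suc k)" for U
    by simp
  moreover have "0 \<le> t" "t \<le> 1"
    using k by (auto simp: t_def)
  ultimately show thesis
    using that by blast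
qed

lemma convex_combination_shift:
  fixes a u u' v v' d :: real
  assumes "0 \<le> a" "a \<le> 1" "u \<le> u' + d" "v \<le> v' + d"
  shows "a * u + (1 - a) * v \<le> a * u' + (1 - a) * v' + d"
proof -
  have "a * u \<le> a * (u' + d)" "(1 - a) * v \<le> (1 - a) * (v' + d)"
    using assms by (simp_all add: mult_left_mono)
  then show ?thesis by (simp add: algebra_simps)
qed

lemma interp_shift:
  assumes "dx > 0" "x \<ge> xl" "\<And>k. U k \<le> U' k + d"
  shows "interp xl dx U x \<le> interp xl dx U' x + d"
proof -
  obtain k t where "0 \<le> t" "t \<le> 1"
    and interp: "\<And>U. interp xl dx U x = (1 - t) * U k + t * U (Suc k)"
    using interp_eq_convex_combination[OF assms(1,2)] by blast
  then show ?thesis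
    using convex_combination_shift[of t "U (Suc k)" "U' (Suc k)" d "U k" "U' k"] assms(3)
    by (simp add: add.commute)
qed

lemma all_pos_rescale_iff:
  fixes h :: real
  assumes "h > 0"
  shows "(\<forall>e>0. P (h * e)) \<longleftrightarrow> (\<forall>\<epsilon>>0. P \<epsilon>)"
proof safe
  fix \<epsilon> :: real
  assume all: "\<forall>e>0. P (h * e)" and "\<epsilon> > 0"
  then have "P (h * (\<epsilon> / h))"
    using assms by (intro all[rule_format] divide_pos_pos)
  then show "P \<epsilon>"
    using assms by simp
qed (use assms in simp)

lemma ereal_minus_SUP_eq_0_iff:
  fixes f :: "'a \<Rightarrow> ereal"
  shows "ereal a - (SUP c\<in>C. f c) = 0 \<longleftrightarrow>
    (\<forall>c\<in>C. f c \<le> ereal a) \<and> (\<forall>e>0. \<exists>c\<in>C. ereal (a - e) < f c)"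
proof -
  have "ereal a - (SUP c\<in>C. f c) = 0 \<longleftrightarrow> (SUP c\<in>C. f c) = ereal a"
    by (cases "SUP c\<in>C. f c") auto
  also have "\<dots> \<longleftrightarrow> (\<forall>c\<in>C. f c \<le> ereal a) \<and> (\<forall>e>0. \<exists>c\<in>C. ereal (a - e) < f c)"
  proof
    assume sup: "(SUP c\<in>C. f c) = ereal a"
    show "(\<forall>c\<in>C. f c \<le> ereal a) \<and> (\<forall>e>0. \<exists>c\<in>C. ereal (a - e) < f c)"
    proof (intro conjI ballI allI impI)
      fix c
      assume "c \<in> C"
      then show "f c \<le> ereal a"
        using sup by (metis SUP_upper)
    next
      fix e :: real
      assume "e > 0"
      then have "ereal (a - e) < (SUP c\<in>C. f c)"
        using sup by simp
      then show "\<exists>c\<in>C. ereal (a - e) < f c"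
        by (simp add: less_SUP_iff)
    qed
  next
    assume "(\<forall>c\<in>C. f c \<le> ereal a) \<and> (\<forall>e>0. \<exists>c\<in>C. ereal (a - e) < f c)"
    then have upper: "\<And>c. c \<in> C \<Longrightarrow> f c \<le> ereal a"
      and approx: "\<And>e. e > 0 \<Longrightarrow> \<exists>c\<in>C. ereal (a - e) < f c"
      by blast+
    show "(SUP c\<in>C. f c) = ereal a"
    proof (rule antisym)
      show "(SUP c\<in>C. f c) \<le> ereal a"
        using upper by (rule SUP_least)
      show "ereal a \<le> (SUP c\<in>C. f c)"
      proof (rule ereal_le_epsilon2)
        fix e :: real
        assume "e > 0"
        then obtain c where "c \<in> C" "ereal (a - e) < f c"
          using approx by blast
        then have "ereal (a - e) \<le> (SUP c\<in>C. f c)"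
          by (meson SUP_upper less_imp_le order_trans)
        then show "ereal a \<le> (SUP c\<in>C. f c) + ereal e"
          by (cases "SUP c\<in>C. f c") auto
      qed
    qed
  qed
  finally show ?thesis .
qed

locale consumption_scheme =
  fixes \<rho> r \<gamma> h xl dx :: real and y lam :: "nat \<Rightarrow> real"
  assumes rho_pos: "0 < \<rho>" and h_pos: "0 < h" and dx_pos: "0 < dx"
    and rho_h_less_1: "\<rho> * h < 1"
    and lam_nonneg: "j \<in> {1, 2} \<Longrightarrow> 0 \<le> lam j"
    and lam_h_less_1: "j \<in> {1, 2} \<Longrightarrow> lam j * h < 1"
begin

definition states :: "(nat \<times> nat) set" where
  "states = UNIV \<times> {1, 2}"

text \<open>Consumption \<open>c = 0\<close> has utility
  \<open>-\<infinity>\<close> and never contributes to the supremum, so it is excluded from the controls.\<close>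

definition controls :: "nat \<times> nat \<Rightarrow> real set" where
  "controls = (\<lambda>(i, j). {c \<in> adm r (y j) h xl dx i. 0 < c})"

definition step :: "nat \<times> nat \<Rightarrow> real \<Rightarrow> (nat \<times> nat \<Rightarrow> real) \<Rightarrow> real" where
  "step = (\<lambda>(i, j) c U. h * crra \<gamma> c + (1 - \<rho> * h) * (lam j * h * U (i, 3 - j)
     + (1 - lam j * h) * interp xl dx (\<lambda>k. U (k, j)) (grid xl dx i + h * drift r (y j) xl dx i c)))"

sublocale discounted_control states controls step "1 - \<rho> * h"
proof
  show "0 \<le> 1 - \<rho> * h" "1 - \<rho> * h < 1"
    using rho_h_less_1 rho_pos h_pos by auto
next
  fix s c and U U' :: "nat \<times> nat \<Rightarrow> real" and d :: real
  assume s: "s \<in> states" and c: "c \<in> controls s" and le: "\<And>t. t \<in> states \<Longrightarrow> U t \<le> U' t + d"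
  obtain i j where ij: "s = (i, j)" "j \<in> {1, 2}"
    using s by (auto simp: states_def)
  define x where "x = grid xl dx i + h * drift r (y j) xl dx i c"
  have "x \<ge> xl"
    using c by (simp add: ij controls_def adm_def x_def)
  then have I: "interp xl dx (\<lambda>k. U (k, j)) x \<le> interp xl dx (\<lambda>k. U' (k, j)) x + d"
    using le ij(2) by (intro interp_shift[OF dx_pos]) (auto simp: states_def)
  moreover have "U (i, 3 - j) \<le> U' (i, 3 - j) + d"
    using le ij(2) by (auto simp: states_def)
  ultimately have "lam j * h * U (i, 3 - j) + (1 - lam j * h) * interp xl dx (\<lambda>k. U (k, j)) x
      \<le> lam j * h * U' (i, 3 - j) + (1 - lam j * h) * interp xl dx (\<lambda>k. U' (k, j)) x + d"
    using lam_nonneg[OF ij(2)] lam_h_less_1[OF ij(2)] h_pos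
    by (intro convex_combination_shift) auto
  then have "(1 - \<rho> * h) * (lam j * h * U (i, 3 - j) + (1 - lam j * h) * interp xl dx (\<lambda>k. U (k, j)) x)
      \<le> (1 - \<rho> * h) * (lam j * h * U' (i, 3 - j) + (1 - lam j * h) * interp xl dx (\<lambda>k. U' (k, j)) x + d)"
    using rho_h_less_1 by (intro mult_left_mono) auto
  then show "step s c U \<le> step s c U' + (1 - \<rho> * h) * d"
    by (simp add: step_def ij x_def algebra_simps)
qed

text \<open>After multiplication by \<open>h\<close>, the identity \<open>\<rho> h + (1 - \<rho> h) = 1\<close> turns the summand of the
  supremum in \<^const>\<open>schemeF\<close> into \<^const>\<open>step\<close>.\<close>

lemma scheme_term_le_iff:
  fixes U :: "nat \<times> nat \<Rightarrow> real" and i j :: nat and c e :: real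
  defines "I \<equiv> interp xl dx (\<lambda>k. U (k, j)) (grid xl dx i + h * drift r (y j) xl dx i c)"
  shows "util \<gamma> c + ereal ((1 - \<rho> * h) * (1 - lam j * h) / h * (I - U (i, j)))
      \<le> ereal (\<rho> * U (i, j) - (1 - \<rho> * h) * lam j * (U (i, 3 - j) - U (i, j)) - e)
    \<longleftrightarrow> (0 < c \<longrightarrow> step (i, j) c U \<le> U (i, j) - h * e)"
proof (cases "0 < c")
  case True
  define q qb a b where "q = U (i, j)" and "qb = U (i, 3 - j)"
    and "a = (1 - \<rho> * h) * (1 - lam j * h)" and "b = (1 - \<rho> * h) * lam j * h"
  have "crra \<gamma> c + a / h * (I - q) \<le> \<rho> * q - (1 - \<rho> * h) * lam j * (qb - q) - e
    \<longleftrightarrow> h * (crra \<gamma> c + a / h * (I - q)) \<le> h * (\<rho> * q - (1 - \<rho> * h) * lam j * (qb - q) - e)"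
    using h_pos by simp
  also have "h * (crra \<gamma> c + a / h * (I - q)) = h * crra \<gamma> c + a * I - a * q"
    using h_pos by (simp add: field_simps)
  also have "h * (\<rho> * q - (1 - \<rho> * h) * lam j * (qb - q) - e) = q - h * e - a * q - b * qb"
    by (simp add: a_def b_def algebra_simps)
  also have "h * crra \<gamma> c + a * I - a * q \<le> q - h * e - a * q - b * qb
    \<longleftrightarrow> step (i, j) c U \<le> q - h * e"
    by (simp add: step_def I_def q_def qb_def a_def b_def algebra_simps)
  finally show ?thesis
    using True by (simp add: util_pos a_def q_def qb_def)
qed (simp add: util_nonpos)

lemma scheme_term_greater_iff:
  fixes U :: "nat \<times> nat \<Rightarrow> real" and i j :: nat and c e :: real
  defines "I \<equiv> interp xl dx (\<lambda>k. U (k, j)) (grid xl dx i + h * drift r (y j) xl dx i c)"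
  shows "ereal (\<rho> * U (i, j) - (1 - \<rho> * h) * lam j * (U (i, 3 - j) - U (i, j)) - e)
      < util \<gamma> c + ereal ((1 - \<rho> * h) * (1 - lam j * h) / h * (I - U (i, j)))
    \<longleftrightarrow> 0 < c \<and> U (i, j) - h * e < step (i, j) c U"
  unfolding I_def using scheme_term_le_iff[where U = U and i = i and j = j and c = c and e = e]
  by (auto simp: not_le[symmetric])

lemma schemeF_eq_0_iff:
  fixes U :: "nat \<times> nat \<Rightarrow> real"
  shows "schemeF \<rho> r \<gamma> (y j) (lam j) h xl dx i (U (i, j)) (U (i, 3 - j)) (\<lambda>k. U (k, j)) = 0
    \<longleftrightarrow> (\<forall>c\<in>controls (i, j). step (i, j) c U \<le> U (i, j))
      \<and> (\<forall>\<epsilon>>0. \<exists>c\<in>controls (i, j). U (i, j) - \<epsilon> < step (i, j) c U)"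
proof -
  have "schemeF \<rho> r \<gamma> (y j) (lam j) h xl dx i (U (i, j)) (U (i, 3 - j)) (\<lambda>k. U (k, j)) = 0
    \<longleftrightarrow> (\<forall>c\<in>controls (i, j). step (i, j) c U \<le> U (i, j))
      \<and> (\<forall>e>0. \<exists>c\<in>controls (i, j). U (i, j) - h * e < step (i, j) c U)"
    unfolding schemeF_def ereal_minus_SUP_eq_0_iff
    using scheme_term_le_iff[where e = 0] scheme_term_greater_iff
    by (simp add: controls_def) blast
  also have "(\<forall>e>0. \<exists>c\<in>controls (i, j). U (i, j) - h * e < step (i, j) c U)
    \<longleftrightarrow> (\<forall>\<epsilon>>0. \<exists>c\<in>controls (i, j). U (i, j) - \<epsilon> < step (i, j) c U)"
    using h_pos by (rule all_pos_rescale_iff)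
  finally show ?thesis .
qed

lemma bounded_states_iff:
  "bounded ((\<lambda>(i, j). W i j) ` states) \<longleftrightarrow> (\<forall>j\<in>{1, 2}. bounded (range (\<lambda>i. W i j)))"
proof -
  have "(\<lambda>(i, j). W i j) ` states = range (\<lambda>i. W i 1) \<union> range (\<lambda>i. W i 2)"
    by (auto simp: states_def)
  then show ?thesis by simp
qed

lemma bellman_solution_iff_scheme:
  "bellman_solution (\<lambda>(i, j). W i j) \<longleftrightarrow>
    (\<forall>i. \<forall>j\<in>{1, 2}. schemeF \<rho> r \<gamma> (y j) (lam j) h xl dx i (W i j) (W i (3 - j)) (\<lambda>k. W k j) = 0)"
  unfolding bellman_solution_def using schemeF_eq_0_iff[where U = "\<lambda>(i, j). W i j"]
  by (simp add: states_def)

lemma scheme_solution_unique: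
  assumes "\<forall>j\<in>{1, 2}. bounded (range (\<lambda>i. W i j))"
    and "\<forall>i. \<forall>j\<in>{1, 2}. schemeF \<rho> r \<gamma> (y j) (lam j) h xl dx i (W i j) (W i (3 - j)) (\<lambda>k. W k j) = 0"
    and "\<forall>j\<in>{1, 2}. bounded (range (\<lambda>i. W' i j))"
    and "\<forall>i. \<forall>j\<in>{1, 2}. schemeF \<rho> r \<gamma> (y j) (lam j) h xl dx i (W' i j) (W' i (3 - j)) (\<lambda>k. W' k j) = 0"
    and "j \<in> {1, 2}"
  shows "W' i j = W i j"
proof -
  have "bellman_solution (\<lambda>(i, j). W i j)" "bellman_solution (\<lambda>(i, j). W' i j)"
    "bounded ((\<lambda>(i, j). W i j) ` states)" "bounded ((\<lambda>(i, j). W' i j) ` states)"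
    using assms(1-4) by (simp_all add: bounded_states_iff bellman_solution_iff_scheme)
  moreover have "(i, j) \<in> states"
    using assms(5) by (simp add: states_def)
  ultimately have "(\<lambda>(i, j). W' i j) (i, j) = (\<lambda>(i, j). W i j) (i, j)"
    by (rule bellman_solution_unique)
  then show ?thesis by simp
qed

lemma finite_value_imp_pos:
  assumes "ereal v = ereal h * util \<gamma> c + ereal w"
  shows "0 < c \<and> v = h * crra \<gamma> c + w"
proof -
  have "0 < c"
  proof (rule ccontr)
    assume "\<not> 0 < c"
    then show False
      using assms h_pos by (simp add: util_nonpos)
  qed
  then show ?thesis
    using assms by (simp add: util_pos)
qed

lemma policy_iteration_of_scheme:
  fixes c V :: "nat \<Rightarrow> nat \<Rightarrow> nat \<Rightarrow> real"
  assumes init: "\<forall>i. \<forall>j\<in>{1,2}. c 0 i j \<in> adm r (y j) h xl dx i"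
    and bdd: "\<forall>\<iota>. \<forall>j\<in>{1,2}. bounded (range (\<lambda>i. V \<iota> i j))"
    and eval: "\<forall>\<iota> i. \<forall>j\<in>{1,2}.
        ereal (V \<iota> i j) = ereal h * util \<gamma> (c \<iota> i j)
          + ereal ((1 - \<rho> * h) * (lam j * h * V \<iota> i (3 - j)
              + (1 - lam j * h) * interp xl dx (\<lambda>k. V \<iota> k j)
                   (grid xl dx i + h * drift r (y j) xl dx i (c \<iota> i j))))"
    and upd: "\<forall>\<iota> i. \<forall>j\<in>{1,2}.
        c (Suc \<iota>) i j \<in> adm r (y j) h xl dx i \<and>
        (\<forall>c'\<in>adm r (y j) h xl dx i.
           ereal h * util \<gamma> c' + ereal ((1 - \<rho> * h) * (1 - lam j * h)
              * interp xl dx (\<lambda>k. V \<iota> k j) (grid xl dx i + h * drift r (y j) xl dx i c'))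
           \<le> ereal h * util \<gamma> (c (Suc \<iota>) i j) + ereal ((1 - \<rho> * h) * (1 - lam j * h)
              * interp xl dx (\<lambda>k. V \<iota> k j)
                  (grid xl dx i + h * drift r (y j) xl dx i (c (Suc \<iota>) i j))))"
  shows "policy_iteration states controls step (1 - \<rho> * h) (\<lambda>n (i, j). c n i j) (\<lambda>n (i, j). V n i j)"
proof unfold_locales
  have evaluation: "0 < c n i j \<and> V n i j = step (i, j) (c n i j) (\<lambda>(i, j). V n i j)"
    if "j \<in> {1, 2}" for n i j
    using finite_value_imp_pos[OF eval[rule_format, OF that, of n i]] by (simp add: step_def)
  have adm: "c n i j \<in> controls (i, j)" if "j \<in> {1, 2}" for n i j
    using init upd evaluation[OF that] that by (cases n) (auto simp: controls_def)
  fix n s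
  assume "s \<in> states"
  then obtain i j where s: "s = (i, j)" and j: "j \<in> {1, 2}"
    by (auto simp: states_def)
  show "(case s of (i, j) \<Rightarrow> c n i j) \<in> controls s"
    using adm[OF j] by (simp add: s)
  show "(case s of (i, j) \<Rightarrow> V n i j) = step s ((case s of (i, j) \<Rightarrow> c n i j)) (\<lambda>(i, j). V n i j)"
    using evaluation[OF j] by (simp add: s)
  fix c'
  assume "c' \<in> controls s"
  then have c': "c' \<in> adm r (y j) h xl dx i" "0 < c'"
    by (auto simp: s controls_def)
  then have "h * crra \<gamma> c' + (1 - \<rho> * h) * (1 - lam j * h)
        * interp xl dx (\<lambda>k. V n k j) (grid xl dx i + h * drift r (y j) xl dx i c')
      \<le> h * crra \<gamma> (c (Suc n) i j) + (1 - \<rho> * h) * (1 - lam j * h)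
        * interp xl dx (\<lambda>k. V n k j) (grid xl dx i + h * drift r (y j) xl dx i (c (Suc n) i j))"
    using upd[rule_format, OF j, of n i, THEN conjunct2, rule_format, OF c'(1)]
      c'(2) evaluation[OF j, of "Suc n" i] by (simp add: util_pos)
  then show "step s c' (\<lambda>(i, j). V n i j) \<le> step s ((case s of (i, j) \<Rightarrow> c (Suc n) i j)) (\<lambda>(i, j). V n i j)"
    by (simp add: s step_def algebra_simps)
next
  show "bounded ((\<lambda>(i, j). V n i j) ` states)" for n
    using bdd bounded_states_iff by blast
qed

end

theorem mainTheorem13:
  fixes \<rho> r \<gamma> xl h dx :: real
    and y lam :: "nat \<Rightarrow> real"
    and c V :: "nat \<Rightarrow> nat \<Rightarrow> nat \<Rightarrow> real"
  assumes "\<rho> > 0" and "r < \<rho>" and "0 < y 1" and "y 1 < y 2" and "\<gamma> > 1"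
    and "xl \<le> 0" and "\<forall>j\<in>{1,2}. \<rho> * xl + y j > 0"
    and "\<forall>j\<in>{1,2}. lam j \<ge> 0"
    and "h > 0" and "dx > 0" and "\<rho> * h < 1" and "\<forall>j\<in>{1,2}. lam j * h < 1"
    \<comment> \<open>initial policy\<close>
    and init: "\<forall>i. \<forall>j\<in>{1,2}. c 0 i j \<in> adm r (y j) h xl dx i"
    \<comment> \<open>iterates are bounded: V^(iota) in B(A)^2\<close>
    and bdd: "\<forall>\<iota>. \<forall>j\<in>{1,2}. bounded (range (\<lambda>i. V \<iota> i j))"
    \<comment> \<open>(i) policy evaluation\<close>
    and eval: "\<forall>\<iota> i. \<forall>j\<in>{1,2}.
        ereal (V \<iota> i j) = ereal h * util \<gamma> (c \<iota> i j)
          + ereal ((1 - \<rho> * h) * (lam j * h * V \<iota> i (3 - j)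
              + (1 - lam j * h) * interp xl dx (\<lambda>k. V \<iota> k j)
                   (grid xl dx i + h * drift r (y j) xl dx i (c \<iota> i j))))"
    \<comment> \<open>(ii) policy update (argmax)\<close>
    and upd: "\<forall>\<iota> i. \<forall>j\<in>{1,2}.
        c (Suc \<iota>) i j \<in> adm r (y j) h xl dx i \<and>
        (\<forall>c'\<in>adm r (y j) h xl dx i.
           ereal h * util \<gamma> c' + ereal ((1 - \<rho> * h) * (1 - lam j * h)
              * interp xl dx (\<lambda>k. V \<iota> k j) (grid xl dx i + h * drift r (y j) xl dx i c'))
           \<le> ereal h * util \<gamma> (c (Suc \<iota>) i j) + ereal ((1 - \<rho> * h) * (1 - lam j * h)
              * interp xl dx (\<lambda>k. V \<iota> k j)
                  (grid xl dx i + h * drift r (y j) xl dx i (c (Suc \<iota>) i j))))"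
  shows "(\<forall>\<iota> i. \<forall>j\<in>{1,2}. V \<iota> i j \<le> V (Suc \<iota>) i j)
    \<and> (\<exists>W :: nat \<Rightarrow> nat \<Rightarrow> real.
         (\<forall>j\<in>{1,2}. bounded (range (\<lambda>i. W i j)))
       \<and> (\<forall>i. \<forall>j\<in>{1,2}. schemeF \<rho> r \<gamma> (y j) (lam j) h xl dx i (W i j) (W i (3 - j)) (\<lambda>k. W k j) = 0)
       \<and> (\<forall>W'. (\<forall>j\<in>{1,2}. bounded (range (\<lambda>i. W' i j)))
              \<and> (\<forall>i. \<forall>j\<in>{1,2}. schemeF \<rho> r \<gamma> (y j) (lam j) h xl dx i (W' i j) (W' i (3 - j)) (\<lambda>k. W' k j) = 0)
              \<longrightarrow> (\<forall>i. \<forall>j\<in>{1,2}. W' i j = W i j))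
       \<and> (\<forall>\<epsilon>>0. \<exists>N. \<forall>\<iota>\<ge>N. \<forall>i. \<forall>j\<in>{1,2}. \<bar>V \<iota> i j - W i j\<bar> < \<epsilon>))"
proof -
  interpret consumption_scheme \<rho> r \<gamma> h xl dx y lam
    using assms(1,8-12) by unfold_locales auto
  interpret policy_iteration states controls step "1 - \<rho> * h"
      "\<lambda>n (i, j). c n i j" "\<lambda>n (i, j). V n i j"
    using init bdd eval upd by (rule policy_iteration_of_scheme)
  define W where "W i j = V_lim (i, j)" for i j
  have V_lim_eq: "V_lim = (\<lambda>(i, j). W i j)"
    by (simp add: W_def)
  have "\<forall>\<iota> i. \<forall>j\<in>{1,2}. V \<iota> i j \<le> V (Suc \<iota>) i j"
    using V_mono by (force simp: states_def)
  moreover have bounded: "\<forall>j\<in>{1,2}. bounded (range (\<lambda>i. W i j))"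
    using bounded_V_lim by (simp add: V_lim_eq bounded_states_iff)
  moreover have solution: "\<forall>i. \<forall>j\<in>{1,2}. schemeF \<rho> r \<gamma> (y j) (lam j) h xl dx i (W i j) (W i (3 - j)) (\<lambda>k. W k j) = 0"
    using bellman_solution_V_lim by (simp add: V_lim_eq bellman_solution_iff_scheme)
  moreover have "\<exists>N. \<forall>\<iota>\<ge>N. \<forall>i. \<forall>j\<in>{1,2}. \<bar>V \<iota> i j - W i j\<bar> < \<epsilon>"
    if \<epsilon>: "\<epsilon> > 0" for \<epsilon>
  proof -
    obtain N where "\<forall>n\<ge>N. \<forall>s\<in>states. \<bar>(\<lambda>(i, j). V n i j) s - V_lim s\<bar> < \<epsilon>"
      using V_uniform_convergence[OF \<epsilon>] by blast
    then show ?thesis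
      by (auto simp: W_def states_def)
  qed
  moreover have "\<forall>W'. (\<forall>j\<in>{1,2}. bounded (range (\<lambda>i. W' i j)))
      \<and> (\<forall>i. \<forall>j\<in>{1,2}. schemeF \<rho> r \<gamma> (y j) (lam j) h xl dx i (W' i j) (W' i (3 - j)) (\<lambda>k. W' k j) = 0)
      \<longrightarrow> (\<forall>i. \<forall>j\<in>{1,2}. W' i j = W i j)"
    using scheme_solution_unique[OF bounded solution] by blast
  ultimately show ?thesis by blast
qed

end
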